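(* Let $L$ be a free $\mathbb Z_{q,\pi}$-module with basis $\{v_i\}_{i\in I}$ and a nondegenerate symmetric sesquilinear form with $\langle i,j\rangle:=\langle v_i,v_j\rangle$, and suppose that for each $i,j\in I$ there is a finite-dimensional $\mathbb Z$-graded super vector space $V_{ij}$ with $\mathrm{grdim}\,V_{ij}=\langle i,j\rangle$. Then the lattice Heisenberg algebra $\mathfrak h_L$ is generated by the complete symmetric functions $h^\pm_{n,i}$, $n\ge1$, $i\in I$, subject to the relations \[ [h^+_{n,i},h^+_{m,j}]=0,\qquad [h^-_{n,i},h^-_{m,j}]=0,\qquad h^+_{n,i}h^-_{m,j}=\sum_{r=0}^{\min(n,m)}\mathrm{grdim}\,S^r(V_{ij})\,h^-_{m-r,j}h^+_{n-r,i} \] for all $n,m\ge1$, $i,j\in I$ (with $h^\pm_{0,i}=1$).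
   Context: $\mathbb F$ is an algebraically closed field of characteristic $0$; $\mathbb Z_{q,\pi}=\mathbb Z[q,q^{-1},\pi]/(\pi^2-1)$, $\mathbb F_{q,\pi}=\mathbb F[q,q^{-1},\pi]/(\pi^2-1)$. A form $L\times L\to\mathbb Z_{q,\pi}$ is sesquilinear if it is $\mathbb Z$-bilinear and $\langle v,q^s\pi^\epsilon w\rangle=q^s\pi^\epsilon\langle v,w\rangle=\langle q^{-s}\pi^\epsilon v,w\rangle$. For a $\mathbb Z\times\mathbb Z_2$-graded vector space $V$, $\mathrm{grdim}V=\sum_{s\in\mathbb Z,\epsilon\in\mathbb Z_2}q^s\pi^\epsilon\dim V_{s,\epsilon}$; $S^r(V)$ is the $r$-th super symmetric power (symmetric on the even part, exterior on the odd part), with the induced grading. For $n\in\mathbb Z$, $\theta_n\colon\mathbb F_{q,\pi}\to\mathbb F_{q,\pi}$ is the $\mathbb F$-algebra map $q\mapsto q^n$, $\pi\mapsto-(-\pi)^n$. The lattice Heisenberg algebra $\mathfrak h_L$ is the $\mathbb F_{q,\pi}$-algebra generated by $p^\pm_{n,i}$ ($n\ge1$, $i\in I$) with relations $[p^+_{n,i},p^+_{m,j}]=0$, $[p^-_{n,i},p^-_{m,j}]=0$, $[p^+_{n,i},p^-_{m,j}]=\delta_{n,m}\,n\,\theta_n(\langle i,j\rangle)$. For a symmetric function $f$, $f^\pm_i$ denotes the image of $f$ under the algebra map from symmetric functions over $\mathbb F_{q,\pi}$ sending the power sum $p_n$ to $p^\pm_{n,i}$; $h_n$ is the complete homogeneous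 symmetric function. *)

theory Defs
  imports "HOL-Library.Poly_Mapping" "HOL-Library.Z2" "HOL-Library.Product_Plus"
          "HOL-Library.Multiset" "HOL-Computational_Algebra.Polynomial"
begin

text \<open>Z[q,q^-1,pi]/(pi^2-1) is the group ring of Z x Z_2 over Z; the monomial q^s pi^e
  corresponds to the key (s,e).  Multiplication on poly_mapping is convolution.\<close>

type_synonym Zqpi = "(int \<times> bit) \<Rightarrow>\<^sub>0 int"
type_synonym 'f Fqpi = "(int \<times> bit) \<Rightarrow>\<^sub>0 'f"

definition qmon :: "int \<Rightarrow> bit \<Rightarrow> (int \<times> bit) \<Rightarrow>\<^sub>0 ('r::zero_neq_one)" where
  "qmon s e = Poly_Mapping.single (s, e) 1"

definition piF :: "(int \<times> bit) \<Rightarrow>\<^sub>0 ('r::zero_neq_one)" where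
  "piF = qmon 0 1"

definition toF :: "Zqpi \<Rightarrow> ('f::ring_1) Fqpi" where
  "toF c = Poly_Mapping.map of_int c"

definition bar :: "Zqpi \<Rightarrow> Zqpi" where
  "bar c = Abs_poly_mapping (\<lambda>(s, e). Poly_Mapping.lookup c (- s, e))"

text \<open>theta_n : q -> q^n, pi -> -(-pi)^n, as F-algebra map (on the basis q^s pi^e).\<close>
definition theta :: "nat \<Rightarrow> ('f::comm_ring_1) Fqpi \<Rightarrow> 'f Fqpi" where
  "theta n c = (\<Sum>k\<in>Poly_Mapping.keys c. Poly_Mapping.single (0, 0) (Poly_Mapping.lookup c k)
        * qmon (int n * fst k) 0
        * (- ((- piF) ^ n)) ^ (if snd k = 1 then 1 else 0))"

text \<open>A finite-dimensional Z x Z_2-graded vector space is described (up to isomorphism)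
  by its graded dimension function d: d (s,e) = dim V_{s,e}.  We fix the homogeneous basis
  {(k,t). k in keys d, t < d k}, the basis vector (k,t) having degree k.\<close>

type_synonym sdim = "(int \<times> bit) \<Rightarrow>\<^sub>0 nat"

definition sbasis :: "sdim \<Rightarrow> ((int \<times> bit) \<times> nat) set" where
  "sbasis d = {(k, t). t < Poly_Mapping.lookup d k}"

definition grdim :: "sdim \<Rightarrow> Zqpi" where
  "grdim d = (\<Sum>b\<in>sbasis d. qmon (fst (fst b)) (snd (fst b)))"

text \<open>Basis of the super symmetric power S^r(V): multisets of size r of basis vectors in
  which odd basis vectors occur at most once (symmetric on even, exterior on odd part);
  the degree of a monomial is the sum of the degrees.\<close>
definition sym_basis :: "sdim \<Rightarrow> nat \<Rightarrow> ((int \<times> bit) \<times> nat) multiset set" where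
  "sym_basis d r = {m. set_mset m \<subseteq> sbasis d \<and> size m = r \<and>
                      (\<forall>b. snd (fst b) = 1 \<longrightarrow> count m b \<le> 1)}"

definition grdim_sym :: "sdim \<Rightarrow> nat \<Rightarrow> Zqpi" where
  "grdim_sym d r = (\<Sum>m\<in>sym_basis d r.
      Poly_Mapping.single (sum_mset (image_mset fst m)) 1)"

text \<open>L = free Z_{q,pi}-module on I; an element is a finitely supported coefficient
  function a :: 'i =>0 Z_{q,pi}.  A sesquilinear form is determined by its Gram
  matrix G i j = <v_i, v_j>: <sum a_i v_i, sum b_j v_j> = sum bar(a_i) b_j G i j.\<close>

definition sform :: "('i \<Rightarrow> 'i \<Rightarrow> Zqpi) \<Rightarrow> ('i \<Rightarrow>\<^sub>0 Zqpi) \<Rightarrow> ('i \<Rightarrow>\<^sub>0 Zqpi) \<Rightarrow> Zqpi" where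
  "sform G a b = (\<Sum>i\<in>Poly_Mapping.keys a. \<Sum>j\<in>Poly_Mapping.keys b. bar (Poly_Mapping.lookup a i) * Poly_Mapping.lookup b j * G i j)"

definition symmetric_form :: "('i \<Rightarrow> 'i \<Rightarrow> Zqpi) \<Rightarrow> bool" where
  "symmetric_form G \<longleftrightarrow> (\<forall>a b. sform G b a = bar (sform G a b))"

definition nondegenerate_form :: "('i \<Rightarrow> 'i \<Rightarrow> Zqpi) \<Rightarrow> bool" where
  "nondegenerate_form G \<longleftrightarrow> (\<forall>a. (\<forall>b. sform G a b = 0) \<longrightarrow> a = 0)"

text \<open>An F_{q,pi}-algebra structure on a ring 'a: a unital ring homomorphism into the centre.\<close>
definition central_alg :: "('f::comm_ring_1 Fqpi \<Rightarrow> 'a::ring_1) \<Rightarrow> bool" where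
  "central_alg emb \<longleftrightarrow> emb 1 = 1 \<and> (\<forall>x y. emb (x + y) = emb x + emb y)
     \<and> (\<forall>x y. emb (x * y) = emb x * emb y) \<and> (\<forall>x a. emb x * a = a * emb x)"

text \<open>Families P s n i with s = True for +, s = False for -, defined for n >= 1.
  Normalisation: P s 0 i = 0 (power sums), H s 0 i = 1 (complete symmetric functions).\<close>

definition heis_rel :: "('f::field_char_0 Fqpi \<Rightarrow> 'a::ring_1) \<Rightarrow> ('i \<Rightarrow> 'i \<Rightarrow> Zqpi)
     \<Rightarrow> (bool \<Rightarrow> nat \<Rightarrow> 'i \<Rightarrow> 'a) \<Rightarrow> bool" where
  "heis_rel emb G P \<longleftrightarrow> (\<forall>s i. P s 0 i = 0) \<and>
     (\<forall>s n m i j. n \<ge> 1 \<longrightarrow> m \<ge> 1 \<longrightarrow> P s n i * P s m j = P s m j * P s n i) \<and>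
     (\<forall>n m i j. n \<ge> 1 \<longrightarrow> m \<ge> 1 \<longrightarrow>
        P True n i * P False m j - P False m j * P True n i =
        (if n = m then emb (of_nat n * theta n (toF (G i j))) else 0))"

text \<open>Image of h_n under the algebra map from symmetric functions sending p_k to X k:
  h_0 = 1 and Newton's identity n h_n = sum_{k=1}^n p_k h_{n-k}.\<close>
function hfun :: "('f::field_char_0 Fqpi \<Rightarrow> 'a::ring_1) \<Rightarrow> (nat \<Rightarrow> 'a) \<Rightarrow> nat \<Rightarrow> 'a" where
  "hfun emb X n = (if n = 0 then 1 else
      emb (Poly_Mapping.single (0, 0) (inverse (of_nat n))) *
        (\<Sum>k\<in>{1..n}. X k * hfun emb X (n - k)))"
  by auto
termination by (relation "measure (\<lambda>(_, _, n). n)") auto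

definition hrel :: "('f::field_char_0 Fqpi \<Rightarrow> 'a::ring_1) \<Rightarrow> ('i \<Rightarrow> 'i \<Rightarrow> sdim)
     \<Rightarrow> (bool \<Rightarrow> nat \<Rightarrow> 'i \<Rightarrow> 'a) \<Rightarrow> bool" where
  "hrel emb V H \<longleftrightarrow> (\<forall>s i. H s 0 i = 1) \<and>
     (\<forall>s n m i j. n \<ge> 1 \<longrightarrow> m \<ge> 1 \<longrightarrow> H s n i * H s m j = H s m j * H s n i) \<and>
     (\<forall>n m i j. n \<ge> 1 \<longrightarrow> m \<ge> 1 \<longrightarrow>
        H True n i * H False m j =
        (\<Sum>r\<in>{0..min n m}. emb (toF (grdim_sym (V i j) r)) * H False (m - r) j * H True (n - r) i))"

definition p_to_h :: "('f::field_char_0 Fqpi \<Rightarrow> 'a::ring_1) \<Rightarrow> (bool \<Rightarrow> nat \<Rightarrow> 'i \<Rightarrow> 'a)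
     \<Rightarrow> (bool \<Rightarrow> nat \<Rightarrow> 'i \<Rightarrow> 'a)" where
  "p_to_h emb P = (\<lambda>s n i. hfun emb (\<lambda>k. P s k i) n)"

definition alg_closed :: "'f::field itself \<Rightarrow> bool" where
  "alg_closed _ \<longleftrightarrow> (\<forall>p::'f poly. degree p \<ge> 1 \<longrightarrow> (\<exists>x. poly p x = 0))"

end

theory Submission
  imports Defs "HOL-Computational_Algebra.Formal_Power_Series"
begin

unbundle fps_syntax

text \<open>
  Fix \<open>i, j\<close> and put \<open>K(t) = \<Sum>\<^sub>m h\<^sup>-\<^sub>m\<^sub>,\<^sub>j t\<^sup>m\<close> and \<open>Q(t) = \<Sum>\<^sub>m p\<^sup>-\<^sub>m\<^sub>,\<^sub>j t\<^sup>m\<close>.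
  Newton's identities say \<open>t K'(t) = Q(t) K(t)\<close>; applying the derivation \<open>[p\<^sup>+\<^sub>n\<^sub>,\<^sub>i, -]\<close>
  shows that the Heisenberg relations \<open>[p\<^sup>+\<^sub>n\<^sub>,\<^sub>i, p\<^sup>-\<^sub>m\<^sub>,\<^sub>j] = \<delta>\<^sub>n\<^sub>m n \<theta>\<^sub>n\<langle>i,j\<rangle>\<close> hold
  iff \<open>[p\<^sup>+\<^sub>n\<^sub>,\<^sub>i, K(t)] = \<theta>\<^sub>n\<langle>i,j\<rangle> t\<^sup>n K(t)\<close> for all \<open>n\<close>. Newton's identities for the
  \<open>h\<^sup>+\<^sub>n\<^sub>,\<^sub>i\<close> turn this, by induction on \<open>n\<close>, into
  \<open>h\<^sup>+\<^sub>n\<^sub>,\<^sub>i K(t) = \<Sum>\<^sub>r c\<^sub>r t\<^sup>r K(t) h\<^sup>+\<^sub>n\<^sub>-\<^sub>r\<^sub>,\<^sub>i\<close>, as soon as the central coefficients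
  \<open>c\<^sub>r\<close> are the complete symmetric functions of the power sums \<open>\<theta>\<^sub>l\<langle>i,j\<rangle>\<close>. For
  \<open>c\<^sub>r = grdim S\<^sup>r(V\<^sub>i\<^sub>j)\<close> this holds because \<open>S(V\<^sub>i\<^sub>j)\<close> is the tensor product of the
  symmetric (for odd vectors: exterior) algebras of the lines spanned by a homogeneous basis,
  and \<open>\<theta>\<^sub>l\<close> is additive. Both steps are reversible because the coefficient algebra contains
  \<open>\<rat>\<close>; so is the passage from the \<open>p\<^sup>\<plusminus>\<close> to the \<open>h\<^sup>\<plusminus>\<close>, which gives the bijection.
\<close>

section \<open>The Euler operator on formal power series\<close>

text \<open>The Euler operator \<open>t d/dt\<close>; unlike \<^const>\<open>fps_deriv\<close> it needs no commutativity.\<close>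

definition fps_euler :: "'a::ring_1 fps \<Rightarrow> 'a fps" where
  "fps_euler f = Abs_fps (\<lambda>n. of_nat n * f $ n)"

lemma fps_euler_nth [simp]: "fps_euler f $ n = of_nat n * f $ n"
  by (simp add: fps_euler_def)

lemma fps_euler_0 [simp]: "fps_euler 0 = 0"
  by (rule fps_ext) simp

lemma fps_euler_diff: "fps_euler (f - g) = fps_euler f - fps_euler g"
  by (rule fps_ext) (simp add: algebra_simps)

lemma fps_euler_const [simp]: "fps_euler (fps_const c) = 0"
  by (rule fps_ext) simp

lemma fps_euler_X_power: "fps_euler (fps_X ^ k :: 'a::ring_1 fps) = of_nat k * fps_X ^ k"
  by (rule fps_ext) (simp flip: fps_of_nat)

lemma fps_euler_mult: "fps_euler (f * g) = fps_euler f * g + f * fps_euler (g :: 'a::ring_1 fps)"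
proof (rule fps_ext)
  fix n
  have "fps_euler (f * g) $ n = (\<Sum>i=0..n. of_nat n * (f$i * g$(n - i)))"
    by (simp add: fps_mult_nth sum_distrib_left)
  also have "\<dots> = (\<Sum>i=0..n. (of_nat i * f$i) * g$(n - i) + f$i * (of_nat (n - i) * g$(n - i)))"
  proof (rule sum.cong [OF refl])
    fix i assume "i \<in> {0..n}"
    then have "of_nat n = (of_nat i + of_nat (n - i) :: 'a)" by (simp flip: of_nat_add)
    then show "of_nat n * (f$i * g$(n - i)) = (of_nat i * f$i) * g$(n - i) + f$i * (of_nat (n - i) * g$(n - i))"
      by (simp add: algebra_simps mult_of_nat_commute)
  qed
  also have "\<dots> = (fps_euler f * g + f * fps_euler g) $ n"
    by (simp add: fps_mult_nth sum.distrib)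
  finally show "fps_euler (f * g) $ n = (fps_euler f * g + f * fps_euler g) $ n" .
qed

lemma fps_euler_prod:
  fixes f g :: "'b \<Rightarrow> 'a::comm_ring_1 fps"
  assumes "finite B" and "\<And>b. b \<in> B \<Longrightarrow> fps_euler (f b) = g b * f b"
  shows "fps_euler (\<Prod>b\<in>B. f b) = (\<Sum>b\<in>B. g b) * (\<Prod>b\<in>B. f b)"
  using assms
proof (induction B rule: finite_induct)
  case empty
  have "fps_euler (1 :: 'a fps) = 0"
    by (rule fps_ext) simp
  then show ?case by simp
next
  case (insert b B)
  then show ?case by (simp add: fps_euler_mult algebra_simps)
qed

lemma fps_euler_eq_mult_imp_eq_0:
  fixes e b :: "'a::ring_1 fps"
  assumes "fps_euler e = b * e" and "b $ 0 = 0" and "e $ 0 = 0"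
    and torsion_free: "\<And>m (x::'a). m > 0 \<Longrightarrow> of_nat m * x = 0 \<Longrightarrow> x = 0"
  shows "e = 0"
proof -
  have "e $ m = 0" for m
  proof (induction m rule: less_induct)
    case (less m)
    show ?case
    proof (cases "m = 0")
      case False
      have "of_nat m * e $ m = (\<Sum>i=0..m. b$i * e$(m - i))"
        using arg_cong [OF assms(1), of "\<lambda>f. f $ m"] by (simp add: fps_mult_nth)
      also have "\<dots> = 0"
      proof (intro sum.neutral ballI)
        fix i assume "i \<in> {0..m}"
        then show "b$i * e$(m - i) = 0" using assms(2) less False by (cases "i = 0") auto
      qed
      finally show ?thesis using torsion_free False by blast
    qed (use assms(3) in simp)
  qed
  then show ?thesis by (intro fps_ext) simp
qed

lemma fps_mult_eq_0_imp_eq_0: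
  fixes d k :: "'a::ring_1 fps"
  assumes "d * k = 0" and "k $ 0 = 1"
  shows "d = 0"
proof -
  have "d $ m = 0" for m
  proof (induction m rule: less_induct)
    case (less m)
    have "{0..m} = insert m {0..<m}" by auto
    then have "0 = (\<Sum>i\<in>insert m {0..<m}. d$i * k$(m - i))"
      using arg_cong [OF assms(1), of "\<lambda>f. f $ m"] by (simp add: fps_mult_nth)
    also have "\<dots> = d $ m" using less assms(2) by simp
    finally show ?case by simp
  qed
  then show ?thesis by (intro fps_ext) simp
qed

lemma fps_of_nat_mult_eq_0_imp_eq_0:
  fixes f :: "'a::ring_1 fps"
  assumes "m > 0" and "of_nat m * f = 0"
    and torsion_free: "\<And>(x::'a). of_nat m * x = 0 \<Longrightarrow> x = 0"
  shows "f = 0"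
proof (rule fps_ext)
  fix i
  have "of_nat m * f $ i = (of_nat m * f) $ i" by (simp flip: fps_of_nat)
  then show "f $ i = 0 $ i" using assms(2) torsion_free by simp
qed

lemma fps_const_sum: "fps_const (sum f S) = (\<Sum>x\<in>S. fps_const (f x))"
  by (rule fps_ext) (simp add: fps_sum_nth)

lemma fps_const_central:
  fixes c :: "'a::ring_1"
  assumes "\<And>x. c * x = x * c"
  shows "fps_const c * f = f * fps_const c"
  by (rule fps_ext) (simp add: assms)

lemma fps_const_X_power_central:
  fixes c :: "'a::ring_1"
  assumes "\<And>x. c * x = x * c"
  shows "fps_const c * fps_X ^ n * f = f * (fps_const c * fps_X ^ n)"
proof -
  have "fps_const c * fps_X ^ n * f = fps_const c * (f * fps_X ^ n)"
    by (simp only: mult.assoc fps_mult_fps_X_power_commute)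
  also have "\<dots> = f * fps_const c * fps_X ^ n"
    by (simp only: fps_const_central [OF assms] mult.assoc [symmetric])
  finally show ?thesis by (simp only: mult.assoc)
qed

section \<open>Newton's identities\<close>

definition newton_pair :: "(nat \<Rightarrow> 'a::ring_1) \<Rightarrow> (nat \<Rightarrow> 'a) \<Rightarrow> bool" where
  "newton_pair p h \<longleftrightarrow> p 0 = 0 \<and> h 0 = 1 \<and> (\<forall>n. of_nat n * h n = (\<Sum>l\<le>n. p l * h (n - l)))"

lemma newton_pair_commute_h:
  fixes p h :: "nat \<Rightarrow> 'a::ring_1"
  assumes "newton_pair p h" and "\<And>l. z * p l = p l * z"
    and torsion_free: "\<And>m (x::'a). m > 0 \<Longrightarrow> of_nat m * x = 0 \<Longrightarrow> x = 0"
  shows "z * h n = h n * z"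
proof (induction n rule: less_induct)
  case (less n)
  show ?case
  proof (cases "n = 0")
    case False
    have "z * (p l * h (n - l)) = p l * h (n - l) * z" if "l \<le> n" for l
    proof (cases "l = 0")
      case False
      with that less have "z * h (n - l) = h (n - l) * z" by simp
      then show ?thesis by (metis assms(2) mult.assoc)
    qed (use assms(1) in \<open>simp add: newton_pair_def\<close>)
    then have "z * (of_nat n * h n) = of_nat n * h n * z"
      using assms(1) by (simp add: newton_pair_def sum_distrib_left sum_distrib_right)
    moreover have "z * (of_nat n * h n) = of_nat n * (z * h n)"
      by (metis mult.assoc mult_of_nat_commute)
    ultimately have "of_nat n * (z * h n - h n * z) = 0"
      by (simp add: right_diff_distrib mult.assoc)
    with False have "z * h n - h n * z = 0"
      using torsion_free by blast
    then show ?thesis by simp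
  qed (use assms(1) in \<open>simp add: newton_pair_def\<close>)
qed

lemma newton_pair_psum_eq:
  assumes "newton_pair p h"
  shows "p n = of_nat n * h n - (\<Sum>l\<in>{1..<n}. p l * h (n - l))"
proof (cases "n = 0")
  case False
  then have "{..n} = insert n (insert 0 {1..<n})" by auto
  then show ?thesis using assms False by (simp add: newton_pair_def)
qed (use assms in \<open>simp add: newton_pair_def\<close>)

lemma newton_pair_commute_p:
  assumes "newton_pair p h" and "\<And>l. z * h l = h l * z"
  shows "z * p n = p n * z"
proof (induction n rule: less_induct)
  case (less n)
  have "z * (\<Sum>l\<in>{1..<n}. p l * h (n - l)) = (\<Sum>l\<in>{1..<n}. p l * h (n - l)) * z"
    unfolding sum_distrib_left sum_distrib_right
  proof (rule sum.cong [OF refl])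
    fix l assume "l \<in> {1..<n}"
    with less assms(2) show "z * (p l * h (n - l)) = p l * h (n - l) * z"
      by (metis atLeastLessThan_iff mult.assoc)
  qed
  moreover have "z * (of_nat n * h n) = of_nat n * h n * z"
    by (metis assms(2) mult.assoc mult_of_nat_commute)
  ultimately show ?case
    by (simp add: newton_pair_psum_eq [OF assms(1), of n] right_diff_distrib left_diff_distrib)
qed

lemma newton_pair_commute_iff:
  fixes p h q k :: "nat \<Rightarrow> 'a::ring_1"
  assumes "newton_pair p h" and "newton_pair q k"
    and torsion_free: "\<And>m (x::'a). m > 0 \<Longrightarrow> of_nat m * x = 0 \<Longrightarrow> x = 0"
  shows "(\<forall>n\<ge>1. \<forall>m\<ge>1. p n * q m = q m * p n) \<longleftrightarrow> (\<forall>n\<ge>1. \<forall>m\<ge>1. h n * k m = k m * h n)"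
proof
  assume "\<forall>n\<ge>1. \<forall>m\<ge>1. p n * q m = q m * p n"
  then have "p n * q l = q l * p n" for n l
    using assms(1,2) by (cases "n = 0 \<or> l = 0") (auto simp: newton_pair_def)
  then have hq: "q l * h n = h n * q l" for n l
    by (intro newton_pair_commute_h [OF assms(1) _ torsion_free]) simp
  show "\<forall>n\<ge>1. \<forall>m\<ge>1. h n * k m = k m * h n"
    by (intro allI impI newton_pair_commute_h [OF assms(2) _ torsion_free]) (rule hq [symmetric])
next
  assume "\<forall>n\<ge>1. \<forall>m\<ge>1. h n * k m = k m * h n"
  then have "h n * k l = k l * h n" for n l
    using assms(1,2) by (cases "n = 0 \<or> l = 0") (auto simp: newton_pair_def)
  then have kp: "k l * p n = p n * k l" for n l
    by (intro newton_pair_commute_p [OF assms(1)]) simp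
  show "\<forall>n\<ge>1. \<forall>m\<ge>1. p n * q m = q m * p n"
    by (intro allI impI newton_pair_commute_p [OF assms(2)]) (rule kp [symmetric])
qed

function newton_psum :: "(nat \<Rightarrow> 'a::ring_1) \<Rightarrow> nat \<Rightarrow> 'a" where
  "newton_psum h n = of_nat n * h n - (\<Sum>l\<in>{1..<n}. newton_psum h l * h (n - l))"
  by auto
termination by (relation "measure (\<lambda>(_, n). n)") auto

declare newton_psum.simps [simp del]

lemma newton_psum_0 [simp]: "newton_psum h 0 = 0"
  by (simp add: newton_psum.simps [of h 0])

lemma newton_pair_newton_psum:
  assumes "h 0 = 1"
  shows "newton_pair (newton_psum h) h"
  unfolding newton_pair_def
proof (intro conjI allI)
  show "newton_psum h 0 = 0" by simp
  show "h 0 = 1" by (fact assms)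
  fix n
  show "of_nat n * h n = (\<Sum>l\<le>n. newton_psum h l * h (n - l))"
  proof (cases "n = 0")
    case False
    then have "{..n} = insert n (insert 0 {1..<n})" by auto
    with False assms show ?thesis
      by (simp add: newton_psum.simps [of h n])
  qed simp
qed

lemma newton_psum_unique:
  assumes "newton_pair p h"
  shows "newton_psum h = p"
proof
  fix n show "newton_psum h n = p n"
  proof (induction n rule: less_induct)
    case (less n)
    then show ?case
      by (simp add: newton_psum.simps [of h n] newton_pair_psum_eq [OF assms, of n])
  qed
qed

section \<open>Power sums and complete symmetric functions in a Heisenberg pair\<close>

lemma sum_triangle_swap:
  fixes f :: "nat \<Rightarrow> nat \<Rightarrow> 'b::comm_monoid_add"
  shows "(\<Sum>l\<le>n. \<Sum>r\<le>n - l. f l r) = (\<Sum>r\<le>n. \<Sum>l\<le>n - r. f l r)"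
proof -
  have "(\<Sum>l\<le>n. \<Sum>r\<le>n - l. f l r) = (\<Sum>(l, r)\<in>Sigma {..n} (\<lambda>l. {..n - l}). f l r)"
    by (simp add: sum.Sigma)
  also have "\<dots> = (\<Sum>(r, l)\<in>Sigma {..n} (\<lambda>r. {..n - r}). f l r)"
    by (rule sum.reindex_bij_witness [where i = "\<lambda>(r, l). (l, r)" and j = "\<lambda>(l, r). (r, l)"]) auto
  also have "\<dots> = (\<Sum>r\<le>n. \<Sum>l\<le>n - r. f l r)"
    by (simp add: sum.Sigma)
  finally show ?thesis .
qed

lemma sum_triangle_diagonal:
  fixes f :: "nat \<Rightarrow> nat \<Rightarrow> 'b::comm_monoid_add"
  shows "(\<Sum>l\<le>n. \<Sum>r\<le>n - l. f l r) = (\<Sum>s\<le>n. \<Sum>l\<le>s. f l (s - l))"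
proof -
  have "Sigma {..n} (\<lambda>l. {..n - l}) = {(l, r). l + r \<le> n}" by auto
  then show ?thesis
    by (simp add: sum.Sigma sum.triangle_reindex_eq)
qed

lemma newton_sum_fps_const:
  assumes "newton_pair p h"
  shows "(\<Sum>l\<le>m. fps_const (p l * h (m - l))) = of_nat m * fps_const (h m)"
  using assms by (simp add: newton_pair_def flip: fps_const_sum fps_of_nat)

text \<open>In the application \<open>p\<close>, \<open>q\<close> are the power sums \<open>p\<^sup>+\<^sub>n\<^sub>,\<^sub>i\<close>, \<open>p\<^sup>-\<^sub>m\<^sub>,\<^sub>j\<close>, \<open>h\<close>, \<open>k\<close> the
  corresponding complete symmetric functions, \<open>g l = \<theta>\<^sub>l\<langle>i,j\<rangle>\<close> and \<open>c r = grdim S\<^sup>r(V\<^sub>i\<^sub>j)\<close>.\<close>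

locale heisenberg_pair =
  fixes p q g h k c :: "nat \<Rightarrow> 'a::ring_1"
  assumes newton_p: "newton_pair p h" and newton_q: "newton_pair q k"
    and newton_g: "newton_pair g c"
    and g_central: "\<And>l x. g l * x = x * g l"
    and torsion_free: "\<And>m (x::'a). m > 0 \<Longrightarrow> of_nat m * x = 0 \<Longrightarrow> x = 0"
begin

lemma initial_terms: "p 0 = 0" "q 0 = 0" "g 0 = 0" "h 0 = 1" "k 0 = 1" "c 0 = 1"
  using newton_p newton_q newton_g by (simp_all add: newton_pair_def)

lemma c_central: "c r * x = x * c r"
  using newton_pair_commute_h [OF newton_g _ torsion_free, where z = x and n = r] g_central by simp

lemma c_X_power_central: "fps_const (c r) * fps_X ^ r * f = f * (fps_const (c r) * fps_X ^ r)"
  by (rule fps_const_X_power_central) (rule c_central)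

definition Q :: "'a fps" where "Q = Abs_fps q"

definition K :: "'a fps" where "K = Abs_fps k"

text \<open>The coefficients of \<open>t\<^sup>m\<close> in the following series are the defects of the relations
  \<open>[p\<^sub>n, q\<^sub>m] = \<delta>\<^sub>n\<^sub>m n g\<^sub>n\<close>, \<open>[p\<^sub>n, k\<^sub>m] = g\<^sub>n k\<^sub>m\<^sub>-\<^sub>n\<close> and
  \<open>h\<^sub>n k\<^sub>m = \<Sum>\<^sub>r c\<^sub>r k\<^sub>m\<^sub>-\<^sub>r h\<^sub>n\<^sub>-\<^sub>r\<close>.\<close>

definition heis_defect :: "nat \<Rightarrow> 'a fps" where
  "heis_defect n = fps_const (p n) * Q - Q * fps_const (p n) - fps_const (of_nat n * g n) * fps_X ^ n"

definition mixed_defect :: "nat \<Rightarrow> 'a fps" where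
  "mixed_defect n = fps_const (p n) * K - K * fps_const (p n) - fps_const (g n) * fps_X ^ n * K"

definition hrel_defect :: "nat \<Rightarrow> 'a fps" where
  "hrel_defect n = fps_const (h n) * K
     - (\<Sum>r\<le>n. fps_const (c r) * fps_X ^ r * K * fps_const (h (n - r)))"

lemma fps_euler_K: "fps_euler K = Q * K"
  using newton_q by (intro fps_ext) (simp add: newton_pair_def K_def Q_def fps_mult_nth atLeast0AtMost)

lemma fps_euler_mixed_defect: "fps_euler (mixed_defect n) = heis_defect n * K + Q * mixed_defect n"
proof -
  have gX_central: "Q * (fps_const (g n) * fps_X ^ n) = fps_const (g n) * fps_X ^ n * Q"
    by (rule fps_const_X_power_central [symmetric]) (rule g_central)
  have ng: "fps_const (g n) * (of_nat n * (fps_X ^ n * K)) = fps_const (of_nat n * g n) * (fps_X ^ n * K)"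
    by (simp only: mult.assoc [symmetric] mult_of_nat_commute [symmetric] fps_of_nat [symmetric]
        fps_const_mult)
  have "fps_euler (mixed_defect n) = fps_const (p n) * (Q * K) - Q * K * fps_const (p n)
      - fps_const (g n) * (of_nat n * fps_X ^ n * K + fps_X ^ n * (Q * K))"
    unfolding mixed_defect_def fps_euler_diff fps_euler_mult fps_euler_K fps_euler_X_power
    by (simp add: algebra_simps)
  also have "\<dots> = fps_const (p n) * Q * K - Q * K * fps_const (p n)
      - fps_const (of_nat n * g n) * fps_X ^ n * K - Q * (fps_const (g n) * fps_X ^ n) * K"
    by (simp add: gX_central ng algebra_simps)
  also have "\<dots> = heis_defect n * K + Q * mixed_defect n"
    by (simp add: heis_defect_def mixed_defect_def algebra_simps)
  finally show ?thesis .
qed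

lemma heis_defect_eq_0_iff: "heis_defect n = 0 \<longleftrightarrow> mixed_defect n = 0"
proof
  assume "heis_defect n = 0"
  show "mixed_defect n = 0"
  proof (rule fps_euler_eq_mult_imp_eq_0 [where b = Q])
    show "fps_euler (mixed_defect n) = Q * mixed_defect n"
      using \<open>heis_defect n = 0\<close> by (simp add: fps_euler_mixed_defect)
    show "Q $ 0 = 0" "mixed_defect n $ 0 = 0"
      using initial_terms by (simp_all add: Q_def mixed_defect_def K_def)
  qed (rule torsion_free)
next
  assume "mixed_defect n = 0"
  then have "heis_defect n * K = 0"
    using fps_euler_mixed_defect [of n] by simp
  then show "heis_defect n = 0"
    by (rule fps_mult_eq_0_imp_eq_0) (simp add: K_def initial_terms)
qed

lemma p_mult_c_X_power_K:
  "fps_const (p l) * (fps_const (c r) * fps_X ^ r * K * z) =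
     fps_const (c r) * fps_X ^ r * mixed_defect l * z
     + fps_const (c r) * fps_X ^ r * K * (fps_const (p l) * z)
     + fps_const (g l * c r) * fps_X ^ (l + r) * K * z"
proof -
  have gc: "fps_const (c r) * fps_X ^ r * (fps_const (g l) * fps_X ^ l)
      = fps_const (g l * c r) * fps_X ^ (l + r)"
  proof -
    have "fps_const (c r) * fps_X ^ r * (fps_const (g l) * fps_X ^ l)
        = fps_const (g l) * (fps_X ^ l * fps_const (c r)) * fps_X ^ r"
      by (subst c_X_power_central) (simp only: mult.assoc)
    also have "\<dots> = fps_const (g l * c r) * fps_X ^ (l + r)"
      by (simp only: fps_mult_fps_X_power_commute [of l "fps_const (c r)"] fps_const_mult [symmetric]
          power_add mult.assoc)
    finally show ?thesis .
  qed
  have "fps_const (p l) * (fps_const (c r) * fps_X ^ r * K * z)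
      = fps_const (p l) * (fps_const (c r) * fps_X ^ r) * (K * z)"
    by (simp only: mult.assoc)
  also have "\<dots> = fps_const (c r) * fps_X ^ r * (fps_const (p l) * K) * z"
    by (subst c_X_power_central [symmetric]) (simp only: mult.assoc)
  also have "fps_const (p l) * K = mixed_defect l + K * fps_const (p l) + fps_const (g l) * fps_X ^ l * K"
    by (simp add: mixed_defect_def)
  also have "fps_const (c r) * fps_X ^ r * (mixed_defect l + K * fps_const (p l)
        + fps_const (g l) * fps_X ^ l * K) * z
      = fps_const (c r) * fps_X ^ r * mixed_defect l * z
        + fps_const (c r) * fps_X ^ r * K * (fps_const (p l) * z)
        + fps_const (c r) * fps_X ^ r * (fps_const (g l) * fps_X ^ l) * K * z"
    by (simp add: algebra_simps)
  finally show ?thesis by (simp only: gc)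
qed

lemma triangle_sum_newton_p:
  "(\<Sum>l\<le>n. \<Sum>r\<le>n - l. fps_const (c r) * fps_X ^ r * K * (fps_const (p l) * fps_const (h (n - l - r))))
     = (\<Sum>r\<le>n. fps_const (c r) * fps_X ^ r * K * (of_nat (n - r) * fps_const (h (n - r))))"
proof -
  have "(\<Sum>l\<le>n - r. fps_const (p l) * fps_const (h (n - l - r))) = of_nat (n - r) * fps_const (h (n - r))"
    for r
    using newton_sum_fps_const [OF newton_p, of "n - r"] by (simp add: add.commute)
  then show ?thesis
    by (simp add: sum_triangle_swap flip: sum_distrib_left)
qed

lemma triangle_sum_newton_g:
  "(\<Sum>l\<le>n. \<Sum>r\<le>n - l. fps_const (g l * c r) * fps_X ^ (l + r) * K * fps_const (h (n - l - r)))
     = (\<Sum>s\<le>n. of_nat s * (fps_const (c s) * fps_X ^ s * K * fps_const (h (n - s))))"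
proof -
  have "(\<Sum>l\<le>s. fps_const (g l * c (s - l)) * fps_X ^ (l + (s - l)) * K * fps_const (h (n - l - (s - l))))
      = (\<Sum>l\<le>s. fps_const (g l * c (s - l))) * (fps_X ^ s * K * fps_const (h (n - s)))" for s
    by (simp add: sum_distrib_right mult.assoc)
  then show ?thesis
    by (simp add: sum_triangle_diagonal newton_sum_fps_const [OF newton_g] mult.assoc)
qed

lemma hrel_defect_recurrence:
  "of_nat n * hrel_defect n = (\<Sum>l\<le>n. fps_const (p l) * hrel_defect (n - l))
     + (\<Sum>l\<le>n. \<Sum>r\<le>n - l. fps_const (c r) * fps_X ^ r * mixed_defect l * fps_const (h (n - l - r)))"
    (is "_ = _ + ?E")
proof -
  define T where "T r = fps_const (c r) * fps_X ^ r * K * fps_const (h (n - r))" for r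
  have "(\<Sum>l\<le>n. fps_const (p l) * hrel_defect (n - l))
      = (\<Sum>l\<le>n. fps_const (p l) * (fps_const (h (n - l)) * K))
        - (\<Sum>l\<le>n. \<Sum>r\<le>n - l. fps_const (p l) * (fps_const (c r) * fps_X ^ r * K * fps_const (h (n - l - r))))"
    by (simp add: hrel_defect_def right_diff_distrib sum_subtractf sum_distrib_left)
  also have "(\<Sum>l\<le>n. fps_const (p l) * (fps_const (h (n - l)) * K)) = of_nat n * fps_const (h n) * K"
    by (simp add: newton_sum_fps_const [OF newton_p] flip: sum_distrib_right mult.assoc)
  also have "(\<Sum>l\<le>n. \<Sum>r\<le>n - l. fps_const (p l) * (fps_const (c r) * fps_X ^ r * K * fps_const (h (n - l - r))))
      = ?E + (\<Sum>r\<le>n. fps_const (c r) * fps_X ^ r * K * (of_nat (n - r) * fps_const (h (n - r))))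
        + (\<Sum>s\<le>n. of_nat s * T s)"
    by (simp only: p_mult_c_X_power_K sum.distrib triangle_sum_newton_p triangle_sum_newton_g T_def)
  also have "(\<Sum>r\<le>n. fps_const (c r) * fps_X ^ r * K * (of_nat (n - r) * fps_const (h (n - r))))
      = (\<Sum>r\<le>n. of_nat (n - r) * T r)"
    by (simp only: T_def mult.assoc [symmetric] mult_of_nat_commute [symmetric])
  finally have expansion: "(\<Sum>l\<le>n. fps_const (p l) * hrel_defect (n - l))
      = of_nat n * fps_const (h n) * K - (?E + (\<Sum>r\<le>n. of_nat (n - r) * T r) + (\<Sum>s\<le>n. of_nat s * T s))" .
  have "(\<Sum>r\<le>n. of_nat (n - r) * T r) + (\<Sum>s\<le>n. of_nat s * T s) = of_nat n * (\<Sum>r\<le>n. T r)"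
    by (simp add: sum_distrib_left flip: sum.distrib distrib_right of_nat_add)
  moreover have "of_nat n * hrel_defect n = of_nat n * fps_const (h n) * K - of_nat n * (\<Sum>r\<le>n. T r)"
    by (simp add: hrel_defect_def T_def right_diff_distrib mult.assoc)
  moreover have "y = x + e" if "x = a - (e + u + v)" "u + v = w" "y = a - w" for x y a e u v w :: "'a fps"
    by (simp add: that(1,3) that(2) [symmetric] algebra_simps)
  ultimately show ?thesis
    using expansion by blast
qed

lemma hrel_defect_0: "hrel_defect 0 = 0"
  by (simp add: hrel_defect_def initial_terms)

text \<open>Once the lower defects vanish, only the term \<open>l = n\<close>, \<open>r = 0\<close> of the recurrence survives.\<close>

lemma hrel_defect_eq_mixed_defect:
  assumes "\<And>l. l < n \<Longrightarrow> mixed_defect l = 0" and "\<And>l. l < n \<Longrightarrow> hrel_defect l = 0"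
  shows "of_nat n * hrel_defect n = mixed_defect n"
proof -
  have "fps_const (p l) * hrel_defect (n - l) = 0" if "l \<le> n" for l
    using that assms(2) initial_terms(1) hrel_defect_0 by (cases "l = 0") auto
  moreover have "{..n} = insert n {..<n}" by auto
  ultimately show ?thesis
    using assms(1) initial_terms by (simp add: hrel_defect_recurrence hrel_defect_0)
qed

lemma mixed_defects_vanish_iff: "(\<forall>l. mixed_defect l = 0) \<longleftrightarrow> (\<forall>l. hrel_defect l = 0)"
proof (intro iffI allI)
  fix n assume mixed: "\<forall>l. mixed_defect l = 0"
  show "hrel_defect n = 0"
  proof (induction n rule: less_induct)
    case (less n)
    then have "of_nat n * hrel_defect n = 0"
      using mixed hrel_defect_eq_mixed_defect by simp
    with torsion_free show ?case
      using fps_of_nat_mult_eq_0_imp_eq_0 [of n "hrel_defect n"] hrel_defect_0 by (cases "n = 0") auto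
  qed
next
  fix n assume "\<forall>l. hrel_defect l = 0"
  then show "mixed_defect n = 0"
  proof (induction n rule: less_induct)
    case (less n)
    then show ?case using hrel_defect_eq_mixed_defect by simp
  qed
qed

lemma heis_defect_nth:
  "heis_defect n $ m = p n * q m - q m * p n - (if m = n then of_nat n * g n else 0)"
  by (simp add: heis_defect_def Q_def)

lemma hrel_defect_nth:
  "hrel_defect n $ m = h n * k m - (\<Sum>r=0..min n m. c r * k (m - r) * h (n - r))"
proof -
  have "(fps_const (c r) * fps_X ^ r * K * fps_const (h (n - r))) $ m
      = (if r \<le> m then c r * k (m - r) * h (n - r) else 0)" for r
    by (simp add: K_def fps_X_power_mult_nth mult.assoc)
  then have "(\<Sum>r\<le>n. (fps_const (c r) * fps_X ^ r * K * fps_const (h (n - r))) $ m)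
      = (\<Sum>r\<in>{r \<in> {..n}. r \<le> m}. c r * k (m - r) * h (n - r))"
    unfolding sum.inter_filter [OF finite_atMost] by simp
  also have "{r \<in> {..n}. r \<le> m} = {0..min n m}" by auto
  finally show ?thesis by (simp add: hrel_defect_def K_def fps_sum_nth)
qed

lemma heis_defects_vanish_iff:
  "(\<forall>n. heis_defect n = 0) \<longleftrightarrow>
   (\<forall>n\<ge>1. \<forall>m\<ge>1. p n * q m - q m * p n = (if n = m then of_nat n * g n else 0))"
proof -
  have "heis_defect n $ m = 0 \<longleftrightarrow>
      (n \<ge> 1 \<longrightarrow> m \<ge> 1 \<longrightarrow> p n * q m - q m * p n = (if n = m then of_nat n * g n else 0))" for n m
    using initial_terms by (cases "n = 0"; cases "m = 0") (auto simp: heis_defect_nth)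
  then show ?thesis by (simp add: fps_eq_iff)
qed

lemma hrel_defects_vanish_iff:
  "(\<forall>n. hrel_defect n = 0) \<longleftrightarrow>
   (\<forall>n\<ge>1. \<forall>m\<ge>1. h n * k m = (\<Sum>r=0..min n m. c r * k (m - r) * h (n - r)))"
proof -
  have "hrel_defect n $ m = 0 \<longleftrightarrow>
      (n \<ge> 1 \<longrightarrow> m \<ge> 1 \<longrightarrow> h n * k m = (\<Sum>r=0..min n m. c r * k (m - r) * h (n - r)))" for n m
    using initial_terms by (cases "n = 0"; cases "m = 0") (auto simp: hrel_defect_nth)
  then show ?thesis by (simp add: fps_eq_iff)
qed

theorem heisenberg_iff_complete:
  "(\<forall>n\<ge>1. \<forall>m\<ge>1. p n * q m - q m * p n = (if n = m then of_nat n * g n else 0)) \<longleftrightarrow>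
   (\<forall>n\<ge>1. \<forall>m\<ge>1. h n * k m = (\<Sum>r=0..min n m. c r * k (m - r) * h (n - r)))"
  unfolding heis_defects_vanish_iff [symmetric] hrel_defects_vanish_iff [symmetric]
  by (simp add: heis_defect_eq_0_iff mixed_defects_vanish_iff)

end

section \<open>Graded dimensions of super symmetric powers\<close>

type_synonym basis_vector = "(int \<times> bit) \<times> nat"

text \<open>As \<^const>\<open>sym_basis\<close>, but over an arbitrary set of basis vectors, to allow induction on it.\<close>

definition sym_monomials :: "basis_vector set \<Rightarrow> nat \<Rightarrow> basis_vector multiset set" where
  "sym_monomials B r = {m. set_mset m \<subseteq> B \<and> size m = r \<and> (\<forall>b. snd (fst b) = 1 \<longrightarrow> count m b \<le> 1)}"

definition monomial_weight :: "basis_vector multiset \<Rightarrow> 'f::comm_ring_1 Fqpi" where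
  "monomial_weight m = Poly_Mapping.single (sum_mset (image_mset fst m)) 1"

definition sym_weight :: "basis_vector set \<Rightarrow> nat \<Rightarrow> 'f::comm_ring_1 Fqpi" where
  "sym_weight B r = (\<Sum>m\<in>sym_monomials B r. monomial_weight m)"

definition basis_weight :: "basis_vector \<Rightarrow> 'f::comm_ring_1 Fqpi" where
  "basis_weight b = Poly_Mapping.single (fst b) 1"

text \<open>The graded dimension of \<open>S\<^sup>j\<close> of the line spanned by \<open>b\<close>, which is exterior if \<open>b\<close> is odd.\<close>

definition line_sym_weight :: "basis_vector \<Rightarrow> nat \<Rightarrow> 'f::comm_ring_1 Fqpi" where
  "line_sym_weight b j = (if snd (fst b) = 1 \<and> 2 \<le> j then 0 else basis_weight b ^ j)"

definition line_psum :: "basis_vector \<Rightarrow> nat \<Rightarrow> 'f::comm_ring_1 Fqpi" where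
  "line_psum b l = (if l = 0 then 0
     else if snd (fst b) = 1 then - ((- basis_weight b) ^ l) else basis_weight b ^ l)"

lemma monomial_weight_union: "monomial_weight (m + m') = monomial_weight m * monomial_weight m'"
  by (simp add: monomial_weight_def mult_single)

lemma monomial_weight_replicate: "monomial_weight (replicate_mset j b) = basis_weight b ^ j"
proof (induction j)
  case (Suc j)
  have "replicate_mset (Suc j) b = {#b#} + replicate_mset j b" by simp
  then show ?case
    by (simp only: monomial_weight_union Suc.IH power_Suc)
       (simp add: monomial_weight_def basis_weight_def)
qed (simp add: monomial_weight_def)

lemma finite_sym_monomials:
  assumes "finite B"
  shows "finite (sym_monomials B r)"
proof (rule finite_subset)
  show "sym_monomials B r \<subseteq> mset ` {xs. set xs \<subseteq> B \<and> length xs = r}"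
    by (auto simp: sym_monomials_def image_iff) (metis mset_set_set size_mset ex_mset set_mset_mset)
  show "finite (mset ` {xs. set xs \<subseteq> B \<and> length xs = r})"
    using finite_lists_length_eq [OF assms] by simp
qed

lemma sym_monomials_insert_bij:
  assumes "b \<notin> B"
  shows "bij_betw (\<lambda>(j, m). replicate_mset j b + m)
           (SIGMA j:{j. j \<le> r \<and> (snd (fst b) = 1 \<longrightarrow> j \<le> 1)}. sym_monomials B (r - j))
           (sym_monomials (insert b B) r)"
proof -
  let ?S = "SIGMA j:{j. j \<le> r \<and> (snd (fst b) = 1 \<longrightarrow> j \<le> 1)}. sym_monomials B (r - j)"
  let ?join = "\<lambda>(j, m). replicate_mset j b + m"
  let ?split = "\<lambda>m. (count m b, filter_mset (\<lambda>x. x \<noteq> b) m)"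
  have count_b: "count m b = 0" if "m \<in> sym_monomials B s" for m s
    using that assms by (auto simp: sym_monomials_def count_eq_zero_iff)
  have "?join \<in> ?S \<rightarrow> sym_monomials (insert b B) r"
  proof
    fix x assume "x \<in> ?S"
    then obtain j m where x: "x = (j, m)" and j: "j \<le> r" "snd (fst b) = 1 \<longrightarrow> j \<le> 1"
      and m: "m \<in> sym_monomials B (r - j)"
      by auto
    have "count (replicate_mset j b + m) b' \<le> 1" if "snd (fst b') = 1" for b'
    proof -
      have "count m b' \<le> 1" using m that unfolding sym_monomials_def by blast
      then show ?thesis using j count_b [OF m] that by (cases "b' = b") auto
    qed
    with j m show "?join x \<in> sym_monomials (insert b B) r"
      by (auto simp: x sym_monomials_def)
  qed
  moreover have "?split \<in> sym_monomials (insert b B) r \<rightarrow> ?S"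
  proof
    fix m assume m: "m \<in> sym_monomials (insert b B) r"
    have "size m = count m b + size (filter_mset (\<lambda>x. x \<noteq> b) m)"
      by (metis filter_eq_replicate_mset multiset_partition size_replicate_mset size_union)
    then have "filter_mset (\<lambda>x. x \<noteq> b) m \<in> sym_monomials B (r - count m b)"
      using m by (auto simp: sym_monomials_def)
    moreover have "count m b \<le> r" "snd (fst b) = 1 \<longrightarrow> count m b \<le> 1"
      using m count_le_size [of m b] unfolding sym_monomials_def by blast+
    ultimately show "?split m \<in> ?S" by simp
  qed
  moreover have "?split (?join x) = x" if "x \<in> ?S" for x
    using that count_b by (auto intro!: multiset_eqI)
  moreover have "?join (?split m) = m" for m
    by (auto intro!: multiset_eqI)
  ultimately show ?thesis
    by (intro bij_betwI) auto
qed

lemma sym_weight_insert: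
  assumes "finite B" and "b \<notin> B"
  shows "sym_weight (insert b B) r = (\<Sum>j\<le>r. line_sym_weight b j * sym_weight B (r - j))"
proof -
  let ?J = "{j. j \<le> r \<and> (snd (fst b) = 1 \<longrightarrow> j \<le> 1)}"
  have "finite ?J" by (rule finite_subset [of _ "{..r}"]) auto
  have "sym_weight (insert b B) r
      = (\<Sum>(j, m)\<in>(SIGMA j:?J. sym_monomials B (r - j)). monomial_weight (replicate_mset j b + m))"
    unfolding sym_weight_def
    by (subst sum.reindex_bij_betw [OF sym_monomials_insert_bij [OF assms(2)], symmetric])
       (simp add: case_prod_unfold)
  also have "\<dots> = (\<Sum>j\<in>?J. basis_weight b ^ j * sym_weight B (r - j))"
    using \<open>finite ?J\<close> finite_sym_monomials [OF assms(1)]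
    by (simp add: sum.Sigma [symmetric] monomial_weight_union monomial_weight_replicate
        sym_weight_def sum_distrib_left)
  also have "\<dots> = (\<Sum>j\<le>r. line_sym_weight b j * sym_weight B (r - j))"
    by (rule sum.mono_neutral_cong_left) (auto simp: line_sym_weight_def)
  finally show ?thesis .
qed

definition sym_series :: "basis_vector set \<Rightarrow> 'f::comm_ring_1 Fqpi fps" where
  "sym_series B = Abs_fps (sym_weight B)"

definition line_series :: "basis_vector \<Rightarrow> 'f::comm_ring_1 Fqpi fps" where
  "line_series b = Abs_fps (line_sym_weight b)"

definition line_psum_series :: "basis_vector \<Rightarrow> 'f::comm_ring_1 Fqpi fps" where
  "line_psum_series b = Abs_fps (line_psum b)"

lemma sym_series_eq_prod:
  assumes "finite B"
  shows "sym_series B = (\<Prod>b\<in>B. line_series b :: 'f::comm_ring_1 Fqpi fps)"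
  using assms
proof (induction B rule: finite_induct)
  case empty
  have "sym_monomials {} r = (if r = 0 then {{#}} else {})" for r
    by (auto simp: sym_monomials_def)
  then show ?case
    by (intro fps_ext) (simp add: sym_series_def sym_weight_def monomial_weight_def)
next
  case (insert b B)
  have "sym_series (insert b B) = line_series b * (sym_series B :: 'f Fqpi fps)"
    using insert.hyps
    by (intro fps_ext) (simp add: sym_series_def line_series_def fps_mult_nth sym_weight_insert
        atLeast0AtMost)
  with insert.IH insert.hyps show ?case by simp
qed

lemma fps_euler_line_series_odd:
  assumes "snd (fst b) = 1"
  shows "fps_euler (line_series b) = line_psum_series b * (line_series b :: 'f::comm_ring_1 Fqpi fps)"
proof -
  define x where "x = (basis_weight b :: 'f Fqpi)"
  have line: "line_series b = 1 + fps_const x * fps_X"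
    by (rule fps_ext) (auto simp: line_series_def line_sym_weight_def assms x_def fps_X_nth
        not_le numeral_2_eq_2 less_Suc_eq)
  have "line_psum_series b * (1 + fps_const x * fps_X) = line_psum_series b
      + fps_const x * (fps_X * line_psum_series b)"
    by (simp add: algebra_simps)
  also have "\<dots> = fps_const x * fps_X"
  proof (rule fps_ext)
    fix l
    show "(line_psum_series b + fps_const x * (fps_X * line_psum_series b)) $ l = (fps_const x * fps_X) $ l"
      by (cases l rule: nat.exhaust [case_product nat.exhaust])
         (auto simp: line_psum_series_def line_psum_def assms x_def fps_X_mult_nth fps_X_nth)
  qed
  also have "\<dots> = fps_euler (1 + fps_const x * fps_X)"
    by (rule fps_ext) (auto simp: fps_X_nth le_Suc_eq)
  finally show ?thesis by (simp add: line)
qed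

lemma fps_euler_line_series_even:
  assumes "snd (fst b) \<noteq> 1"
  shows "fps_euler (line_series b) = line_psum_series b * (line_series b :: 'f::comm_ring_1 Fqpi fps)"
proof (rule fps_ext)
  fix r
  have "(line_psum_series b * (line_series b :: 'f Fqpi fps)) $ r
      = (\<Sum>i=0..r. if i = 0 then 0 else basis_weight b ^ r)"
    using assms by (auto simp: fps_mult_nth line_psum_series_def line_series_def line_psum_def
        line_sym_weight_def power_add [symmetric] intro: sum.cong)
  also have "\<dots> = of_nat r * basis_weight b ^ r"
  proof -
    have "(\<Sum>i=0..n. if i = 0 then 0 else y) = of_nat n * y" for n and y :: "'f Fqpi"
      by (induction n) (simp_all add: algebra_simps)
    then show ?thesis .
  qed
  finally show "fps_euler (line_series b) $ r = (line_psum_series b * (line_series b :: 'f Fqpi fps)) $ r"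
    using assms by (simp add: line_series_def line_sym_weight_def)
qed

lemma fps_euler_line_series:
  "fps_euler (line_series b) = line_psum_series b * (line_series b :: 'f::comm_ring_1 Fqpi fps)"
  using fps_euler_line_series_odd fps_euler_line_series_even by blast

lemma newton_pair_sym_weight:
  assumes "finite B"
  shows "newton_pair (\<lambda>l. \<Sum>b\<in>B. line_psum b l) (sym_weight B :: nat \<Rightarrow> 'f::comm_ring_1 Fqpi)"
  unfolding newton_pair_def
proof (intro conjI allI)
  show "(\<Sum>b\<in>B. line_psum b 0) = (0 :: 'f Fqpi)"
    by (simp add: line_psum_def)
  have "sym_monomials B 0 = {{#}}"
    by (auto simp: sym_monomials_def)
  then show "sym_weight B 0 = (1 :: 'f Fqpi)"
    by (simp add: sym_weight_def monomial_weight_def)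
  have euler: "fps_euler (sym_series B) = (\<Sum>b\<in>B. line_psum_series b) * (sym_series B :: 'f Fqpi fps)"
    unfolding sym_series_eq_prod [OF assms]
    by (rule fps_euler_prod [OF assms fps_euler_line_series])
  show "of_nat n * sym_weight B n = (\<Sum>l\<le>n. (\<Sum>b\<in>B. line_psum b l) * (sym_weight B (n - l) :: 'f Fqpi))"
    for n
    using arg_cong [OF euler, of "\<lambda>f. f $ n"]
    by (simp add: sym_series_def line_psum_series_def fps_mult_nth fps_sum_nth atLeast0AtMost)
qed

lemma lookup_toF: "Poly_Mapping.lookup (toF c :: 'f::ring_1 Fqpi) k = of_int (Poly_Mapping.lookup c k)"
  by (simp add: toF_def Poly_Mapping.map.rep_eq when_def)

lemma toF_add: "(toF (a + b) :: 'f::ring_1 Fqpi) = toF a + toF b"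
  by (rule poly_mapping_eqI) (simp add: lookup_toF lookup_add)

lemma toF_0: "(toF 0 :: 'f::ring_1 Fqpi) = 0"
  by (rule poly_mapping_eqI) (simp add: lookup_toF)

lemma toF_sum: "(toF (sum f S) :: 'f::ring_1 Fqpi) = (\<Sum>x\<in>S. toF (f x))"
  by (induction S rule: infinite_finite_induct) (simp_all add: toF_0 toF_add)

lemma toF_single_1: "(toF (Poly_Mapping.single k 1) :: 'f::ring_1 Fqpi) = Poly_Mapping.single k 1"
  by (simp add: toF_def)

lemma finite_sbasis: "finite (sbasis d)"
proof (rule finite_subset)
  show "sbasis d \<subseteq> (\<Union>k\<in>Poly_Mapping.keys d. {k} \<times> {..<Poly_Mapping.lookup d k})"
    by (auto simp: sbasis_def in_keys_iff)
qed simp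

lemma toF_grdim_sym: "(toF (grdim_sym d r) :: 'f::comm_ring_1 Fqpi) = sym_weight (sbasis d) r"
  by (simp add: grdim_sym_def sym_basis_def sym_monomials_def sym_weight_def monomial_weight_def
      toF_sum toF_single_1)

lemma toF_grdim: "(toF (grdim d) :: 'f::comm_ring_1 Fqpi) = (\<Sum>b\<in>sbasis d. basis_weight b)"
  by (simp add: grdim_def qmon_def basis_weight_def toF_sum toF_single_1)

lemma theta_eq_sum:
  assumes "finite S" and "Poly_Mapping.keys c \<subseteq> S"
  shows "theta n c = (\<Sum>k\<in>S. Poly_Mapping.single (0, 0) (Poly_Mapping.lookup c k)
      * qmon (int n * fst k) 0 * (- ((- piF) ^ n)) ^ (if snd k = 1 then 1 else 0))"
  unfolding theta_def
  by (rule sum.mono_neutral_left) (use assms in \<open>auto simp: in_keys_iff\<close>)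

lemma theta_add: "theta n (a + b) = theta n a + theta n (b :: 'f::comm_ring_1 Fqpi)"
proof -
  let ?S = "Poly_Mapping.keys a \<union> Poly_Mapping.keys b"
  have "finite ?S" and "Poly_Mapping.keys (a + b) \<subseteq> ?S"
    by (simp_all add: keys_add)
  then show ?thesis
    by (simp add: theta_eq_sum [of ?S] lookup_add single_add distrib_right sum.distrib)
qed

lemma theta_sum: "theta n (sum f S) = (\<Sum>x\<in>S. theta n (f x :: 'f::comm_ring_1 Fqpi))"
proof (induction S rule: infinite_finite_induct)
  case (insert x S)
  then show ?case by (simp add: theta_add)
qed (simp_all add: theta_def)

lemma qmon_power: "(qmon s 0 :: 'f::comm_ring_1 Fqpi) ^ n = qmon (int n * s) 0"
  by (induction n) (simp_all add: qmon_def mult_single algebra_simps flip: zero_prod_def)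

lemma theta_basis_weight:
  "theta n (basis_weight b :: 'f::comm_ring_1 Fqpi)
     = (if snd (fst b) = 1 then - ((- basis_weight b) ^ n) else basis_weight b ^ n)"
proof -
  obtain s e where b: "fst b = (s, e)" by (cases "fst b")
  have theta_b: "theta n (basis_weight b :: 'f Fqpi)
      = qmon (int n * s) 0 * (- ((- piF) ^ n)) ^ (if e = 1 then 1 else 0)"
    by (simp add: theta_def basis_weight_def b flip: zero_prod_def)
  show ?thesis
  proof (cases "e = 1")
    case True
    have "(basis_weight b :: 'f Fqpi) = qmon s 0 * piF"
      by (simp add: basis_weight_def b True piF_def qmon_def mult_single)
    then have "(- basis_weight b) ^ n = qmon (int n * s) 0 * ((- piF) ^ n :: 'f Fqpi)"
      by (simp add: power_mult_distrib qmon_power flip: mult_minus_right)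
    then show ?thesis using True b theta_b by simp
  next
    case False
    then have "(basis_weight b :: 'f Fqpi) = qmon s 0"
      by (simp add: basis_weight_def b qmon_def)
    then show ?thesis using False b theta_b by (simp add: qmon_power)
  qed
qed

lemma newton_pair_grdim_sym:
  "newton_pair (\<lambda>l. if l = 0 then 0 else theta l (toF (grdim d)))
     (\<lambda>r. toF (grdim_sym d r) :: 'f::comm_ring_1 Fqpi)"
proof -
  have psum: "(\<lambda>l. \<Sum>b\<in>sbasis d. line_psum b l) = (\<lambda>l. if l = 0 then 0 else theta l (toF (grdim d) :: 'f Fqpi))"
    by (rule ext) (simp add: toF_grdim theta_sum theta_basis_weight line_psum_def)
  have "(\<lambda>r. toF (grdim_sym d r) :: 'f Fqpi) = sym_weight (sbasis d)"
    by (simp add: toF_grdim_sym)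
  then show ?thesis
    unfolding psum [symmetric] by (simp add: newton_pair_sym_weight [OF finite_sbasis])
qed

section \<open>The lattice Heisenberg algebra\<close>

declare hfun.simps [simp del]

lemma heis_rel_at_0: "heis_rel emb G P \<Longrightarrow> P s 0 i = 0"
  by (simp add: heis_rel_def)

lemma hrel_at_0: "hrel emb V H \<Longrightarrow> H s 0 i = 1"
  by (simp add: hrel_def)

definition h_to_p :: "(bool \<Rightarrow> nat \<Rightarrow> 'i \<Rightarrow> 'a::ring_1) \<Rightarrow> (bool \<Rightarrow> nat \<Rightarrow> 'i \<Rightarrow> 'a)" where
  "h_to_p H = (\<lambda>s n i. newton_psum (\<lambda>k. H s k i) n)"

context
  fixes emb :: "'f::field_char_0 Fqpi \<Rightarrow> 'a::ring_1"
  assumes emb: "central_alg emb"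
begin

lemma emb_1: "emb 1 = 1"
  and emb_add: "emb (x + y) = emb x + emb y"
  and emb_mult: "emb (x * y) = emb x * emb y"
  using emb unfolding central_alg_def by blast+

lemma emb_central: "emb x * z = z * emb x"
  using emb unfolding central_alg_def by blast

lemma emb_0: "emb 0 = 0"
  using emb_add [of 0 0] by simp

lemma emb_sum: "emb (sum f S) = (\<Sum>x\<in>S. emb (f x))"
  by (induction S rule: infinite_finite_induct) (simp_all add: emb_0 emb_add)

lemma emb_of_nat: "emb (of_nat n) = of_nat n"
  by (induction n) (simp_all add: emb_0 emb_add emb_1)

lemma emb_inverse_of_nat:
  assumes "n > 0"
  shows "emb (Poly_Mapping.single (0, 0) (inverse (of_nat n))) * of_nat n = 1"
proof -
  have "Poly_Mapping.single (0, 0) (inverse (of_nat n)) * (of_nat n :: 'f Fqpi)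
      = Poly_Mapping.single (0, 0) (inverse (of_nat n)) * Poly_Mapping.single (0, 0) (of_nat n)"
    by (simp flip: zero_prod_def)
  also have "\<dots> = 1"
    by (simp only: mult_single) (simp add: assms flip: zero_prod_def)
  finally have "emb (Poly_Mapping.single (0, 0) (inverse (of_nat n)) * of_nat n) = emb 1"
    by (rule arg_cong)
  then show ?thesis
    by (simp only: emb_mult emb_of_nat emb_1)
qed

lemma central_alg_torsion_free:
  fixes x :: 'a
  assumes "m > 0" and "of_nat m * x = 0"
  shows "x = 0"
proof -
  have "x = emb (Poly_Mapping.single (0, 0) (inverse (of_nat m))) * of_nat m * x"
    using emb_inverse_of_nat [OF assms(1)] by simp
  then show ?thesis using assms(2) by (simp add: mult.assoc)
qed

lemma newton_pair_emb:
  assumes "newton_pair p h"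
  shows "newton_pair (\<lambda>n. emb (p n)) (\<lambda>n. emb (h n))"
  unfolding newton_pair_def
proof (intro conjI allI)
  show "emb (p 0) = 0" "emb (h 0) = 1"
    using assms by (simp_all add: newton_pair_def emb_0 emb_1)
  fix n
  have "emb (of_nat n * h n) = emb (\<Sum>l\<le>n. p l * h (n - l))"
    using assms by (simp add: newton_pair_def)
  then show "of_nat n * emb (h n) = (\<Sum>l\<le>n. emb (p l) * emb (h (n - l)))"
    by (simp add: emb_mult emb_sum emb_of_nat)
qed

lemma of_nat_mult_emb_inverse:
  assumes "n > 0"
  shows "of_nat n * emb (Poly_Mapping.single (0, 0) (inverse (of_nat n))) = 1"
  using emb_inverse_of_nat [OF assms] by (simp add: mult_of_nat_commute)

lemma newton_pair_hfun:
  assumes "X 0 = 0"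
  shows "newton_pair X (hfun emb X)"
  unfolding newton_pair_def
proof (intro conjI allI)
  show "X 0 = 0" by (fact assms)
  show "hfun emb X 0 = 1" by (simp add: hfun.simps)
  fix n
  show "of_nat n * hfun emb X n = (\<Sum>l\<le>n. X l * hfun emb X (n - l))"
  proof (cases "n = 0")
    case False
    have "{..n} = insert 0 {1..n}" by auto
    then show ?thesis
      using False assms of_nat_mult_emb_inverse [of n]
      by (simp add: hfun.simps [of emb X n] mult.assoc [symmetric])
  qed (simp add: assms)
qed

lemma hfun_unique:
  assumes "newton_pair X h"
  shows "hfun emb X = h"
proof
  fix n show "hfun emb X n = h n"
  proof (induction n rule: less_induct)
    case (less n)
    show ?case
    proof (cases "n = 0")
      case False
      have "{..n} = insert 0 {1..n}" by auto
      then have "(\<Sum>k\<in>{1..n}. X k * hfun emb X (n - k)) = of_nat n * h n"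
        using assms less False by (simp add: newton_pair_def)
      then show ?thesis
        using False emb_inverse_of_nat [of n] by (simp add: hfun.simps [of emb X n] mult.assoc [symmetric])
    qed (use assms in \<open>simp add: hfun.simps newton_pair_def\<close>)
  qed
qed

lemma newton_pair_p_to_h:
  assumes "P s 0 i = 0"
  shows "newton_pair (\<lambda>k. P s k i) (\<lambda>k. p_to_h emb P s k i)"
  using newton_pair_hfun [of "\<lambda>k. P s k i"] assms by (simp add: p_to_h_def)

lemma h_to_p_p_to_h:
  assumes "\<And>s i. P s 0 i = 0"
  shows "h_to_p (p_to_h emb P) = P"
  by (intro ext) (simp add: h_to_p_def newton_psum_unique [OF newton_pair_p_to_h] assms)

lemma p_to_h_h_to_p:
  assumes "\<And>s i. H s 0 i = 1"
  shows "p_to_h emb (h_to_p H) = H"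
  by (intro ext) (simp add: p_to_h_def h_to_p_def hfun_unique [OF newton_pair_newton_psum] assms)

lemma heis_cross_iff_hrel_cross:
  assumes "grdim (V i j) = G i j" and "P True 0 i = 0" and "P False 0 j = 0"
  shows "(\<forall>n\<ge>1. \<forall>m\<ge>1. P True n i * P False m j - P False m j * P True n i =
            (if n = m then emb (of_nat n * theta n (toF (G i j))) else 0))
    \<longleftrightarrow> (\<forall>n\<ge>1. \<forall>m\<ge>1. p_to_h emb P True n i * p_to_h emb P False m j =
            (\<Sum>r=0..min n m. emb (toF (grdim_sym (V i j) r))
               * p_to_h emb P False (m - r) j * p_to_h emb P True (n - r) i))"
proof -
  define g where "g = (\<lambda>l. emb (if l = 0 then 0 else theta l (toF (grdim (V i j)))))"
  interpret heisenberg_pair "\<lambda>k. P True k i" "\<lambda>k. P False k j" g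
      "\<lambda>k. p_to_h emb P True k i" "\<lambda>k. p_to_h emb P False k j"
      "\<lambda>r. emb (toF (grdim_sym (V i j) r))"
    using newton_pair_p_to_h assms(2,3) newton_pair_emb [OF newton_pair_grdim_sym] emb_central
      central_alg_torsion_free
    by unfold_locales (simp_all add: g_def)
  have "emb (of_nat n * theta n (toF (G i j))) = of_nat n * g n" if "n \<ge> 1" for n
    using that assms(1) by (simp add: g_def emb_mult emb_of_nat)
  with heisenberg_iff_complete show ?thesis
    by (simp only: cong: imp_cong)
qed

lemma heis_rel_iff_hrel:
  assumes "\<And>i j. grdim (V i j) = G i j" and "\<And>s i. P s 0 i = 0"
  shows "heis_rel emb G P \<longleftrightarrow> hrel emb V (p_to_h emb P)"
proof -
  let ?H = "p_to_h emb P"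
  have newton: "newton_pair (\<lambda>k. P s k i) (\<lambda>k. ?H s k i)" for s i
    using assms(2) by (rule newton_pair_p_to_h)
  have "(\<forall>n\<ge>1. \<forall>m\<ge>1. P s n i * P s m j = P s m j * P s n i) \<longleftrightarrow>
      (\<forall>n\<ge>1. \<forall>m\<ge>1. ?H s n i * ?H s m j = ?H s m j * ?H s n i)" for s i j
    by (rule newton_pair_commute_iff [OF newton newton]) (metis central_alg_torsion_free)
  then have "(\<forall>s n m i j. 1 \<le> n \<longrightarrow> 1 \<le> m \<longrightarrow> P s n i * P s m j = P s m j * P s n i) \<longleftrightarrow>
      (\<forall>s n m i j. 1 \<le> n \<longrightarrow> 1 \<le> m \<longrightarrow> ?H s n i * ?H s m j = ?H s m j * ?H s n i)"
    by blast
  moreover have "(\<forall>n\<ge>1. \<forall>m\<ge>1. P True n i * P False m j - P False m j * P True n i =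
        (if n = m then emb (of_nat n * theta n (toF (G i j))) else 0)) \<longleftrightarrow>
      (\<forall>n\<ge>1. \<forall>m\<ge>1. ?H True n i * ?H False m j =
        (\<Sum>r=0..min n m. emb (toF (grdim_sym (V i j) r)) * ?H False (m - r) j * ?H True (n - r) i))"
    for i j
    by (rule heis_cross_iff_hrel_cross) (simp_all add: assms)
  then have "(\<forall>n m i j. 1 \<le> n \<longrightarrow> 1 \<le> m \<longrightarrow> P True n i * P False m j - P False m j * P True n i =
        (if n = m then emb (of_nat n * theta n (toF (G i j))) else 0)) \<longleftrightarrow>
      (\<forall>n m i j. 1 \<le> n \<longrightarrow> 1 \<le> m \<longrightarrow> ?H True n i * ?H False m j =
        (\<Sum>r=0..min n m. emb (toF (grdim_sym (V i j) r)) * ?H False (m - r) j * ?H True (n - r) i))"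
    by blast
  moreover have "?H s 0 i = 1" for s i
    by (simp add: p_to_h_def hfun.simps)
  ultimately show ?thesis
    using assms(2) unfolding heis_rel_def hrel_def by simp
qed

end

theorem propositionA1:
  fixes G :: "'i \<Rightarrow> 'i \<Rightarrow> Zqpi"
    and V :: "'i \<Rightarrow> 'i \<Rightarrow> sdim"
    and emb :: "'f::field_char_0 Fqpi \<Rightarrow> 'a::ring_1"
  assumes "alg_closed TYPE('f)"
    and "symmetric_form G"
    and "nondegenerate_form G"
    and "\<And>i j. grdim (V i j) = G i j"
    and "central_alg emb"
  shows "bij_betw (p_to_h emb) {P. heis_rel emb G P} {H. hrel emb V H}"
proof (rule bij_betw_byWitness [where f' = h_to_p])
  have p_to_h_inverse: "p_to_h emb (h_to_p H) = H" if "hrel emb V H" for H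
    using that by (intro p_to_h_h_to_p [OF assms(5)] hrel_at_0)
  have rel_iff: "heis_rel emb G P \<longleftrightarrow> hrel emb V (p_to_h emb P)" if "\<And>s i. P s 0 i = 0" for P
    by (rule heis_rel_iff_hrel [where V = V and G = G and P = P, OF assms(5) assms(4) that])
  show "\<forall>P\<in>{P. heis_rel emb G P}. h_to_p (p_to_h emb P) = P"
    by (auto intro: h_to_p_p_to_h [OF assms(5)] heis_rel_at_0)
  show "\<forall>H\<in>{H. hrel emb V H}. p_to_h emb (h_to_p H) = H"
    using p_to_h_inverse by simp
  show "p_to_h emb ` {P. heis_rel emb G P} \<subseteq> {H. hrel emb V H}"
  proof clarify
    fix P assume P: "heis_rel emb G P"
    then show "hrel emb V (p_to_h emb P)"
      using rel_iff [of P, OF heis_rel_at_0 [OF P]] by simp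
  qed
  show "h_to_p ` {H. hrel emb V H} \<subseteq> {P. heis_rel emb G P}"
    using rel_iff [of "h_to_p H" for H] p_to_h_inverse by (auto simp: h_to_p_def)
qed

end
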